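(* Let $A,B$ be complex $2\times 2$ matrices. The following are equivalent: (1) $A$ and $B$ have identical pseudospectra, i.e. $\|(zI-A)^{-1}\|=\|(zI-B)^{-1}\|$ for all $z\in\mathbb{C}$; (2) $A$ and $B$ are polynomially isometric, i.e. $\|p(A)\|=\|p(B)\|$ for every complex polynomial $p$; (3) $A$ and $B$ have super-identical pseudospectra, i.e. $s_k(zI-A)=s_k(zI-B)$ for all $z\in\mathbb{C}$ and $k=1,2$; (4) $A$ and $B$ are unitarily similar.
   Context: $\|\cdot\|$ is the spectral norm. By convention $\|(zI-T)^{-1}\|=\infty$ for $z$ an eigenvalue of $T$. For a $d\times d$ matrix $T$, $s_1(T)\ge\cdots\ge s_d(T)$ denote its singular values (nonnegative square roots of the eigenvalues of $T^*T$, in nonincreasing order). *)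

theory Defs
  imports "HOL-Analysis.Analysis" "HOL-Computational_Algebra.Polynomial" "HOL-Library.Multiset"
begin

text \<open>Square complex matrices are modelled as complex^'n^'n; the 2x2 case is complex^2^2.
  The norm on complex^'n is the Euclidean (Hermitian) norm, so the operator norm below is the
  spectral norm.\<close>

definition spec_norm :: "complex^'n^'n \<Rightarrow> real" where
  "spec_norm T = onorm (\<lambda>x. T *v x)"

definition resolvent_norm :: "complex^'n^'n \<Rightarrow> complex \<Rightarrow> ereal" where
  "resolvent_norm T z =
     (if invertible (mat z - T) then ereal (spec_norm (matrix_inv (mat z - T))) else \<infinity>)"

definition adj :: "complex^'n^'n \<Rightarrow> complex^'n^'n" where
  "adj T = (\<chi> i j. cnj (T $ j $ i))"

definition unitary_mat :: "complex^'n^'n \<Rightarrow> bool" where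
  "unitary_mat U \<longleftrightarrow> adj U ** U = mat 1"

definition unitarily_similar :: "complex^'n^'n \<Rightarrow> complex^'n^'n \<Rightarrow> bool" where
  "unitarily_similar A B \<longleftrightarrow> (\<exists>U. unitary_mat U \<and> B = adj U ** A ** U)"

definition mat_pow :: "complex^'n^'n \<Rightarrow> nat \<Rightarrow> complex^'n^'n" where
  "mat_pow A k = ((\<lambda>M. A ** M) ^^ k) (mat 1)"

definition poly_mat :: "complex poly \<Rightarrow> complex^'n^'n \<Rightarrow> complex^'n^'n" where
  "poly_mat p A = (\<Sum>k\<le>degree p. mat (coeff p k) ** mat_pow A k)"

definition charpoly :: "complex^'n^'n \<Rightarrow> complex poly" where
  "charpoly M = det (mat [:0, 1:] - (\<chi> i j. [:M $ i $ j:]))"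

definition eig_mset :: "complex^'n^'n \<Rightarrow> complex multiset" where
  "eig_mset M = (THE m. size m = CARD('n) \<and> charpoly M = (\<Prod>a\<in>#m. [:- a, 1:]))"

text \<open>Singular values s_1 \<ge> ... \<ge> s_n: nonnegative square roots of the eigenvalues of T*T,
  in nonincreasing order; sing_val T k = s_k(T) for 1 \<le> k \<le> n.\<close>
definition singular_values :: "complex^'n^'n \<Rightarrow> real list" where
  "singular_values T =
     rev (sorted_list_of_multiset (image_mset (\<lambda>\<mu>. sqrt (Re \<mu>)) (eig_mset (adj T ** T))))"

definition sing_val :: "complex^'n^'n \<Rightarrow> nat \<Rightarrow> real" where
  "sing_val T k = singular_values T ! (k - 1)"

end

theory Submission
  imports Defs
begin

(* For a 2x2 matrix M the squared singular values are the roots of t^2 - |M|_F^2 t + |det M|^2,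
   so the spectral norm and both singular values depend only on the unitarily invariant quantities
   |M|_F and |det M|; this gives (4) => (2) and (4) => (3).  Conversely, by Schur triangularisation
   M is unitarily similar to [[l, c], [0, tr M - l]] with c >= 0, where c^2 = |M|_F^2 - |l|^2 -
   |tr M - l|^2; hence trace, determinant and Frobenius norm determine M up to unitary similarity.
   Under (1) or (3) the eigenvalues, where the resolvent norm is infinite resp. where s_2(zI - M)
   vanishes, give trace and determinant, and |zI - M|_F^2 is recovered as s_1^2 + s_2^2 resp. from
   the norm and the determinant of (zI - M)^-1; this gives (1) => (4) and (3) => (4).  Finally,
   (2) says that p(A) = 0 iff p(B) = 0, which by Cayley-Hamilton forces equal traces and
   determinants; then (zI - M)^-1 is the same polynomial of degree one in A and in B, so (2)
   implies (1). *)

lemma adj_adj [simp]: "adj (adj T) = T"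
  by (simp add: adj_def vec_eq_iff)

lemma adj_matrix_mul: "adj (S ** T) = adj T ** adj (S :: complex^'n^'n)"
  by (simp add: adj_def matrix_matrix_mult_def vec_eq_iff mult.commute)

lemma matrix_add_rdistrib: "(A + B) ** C = A ** C + B ** (C :: 'a::semiring_1^'p^'n)"
  by (vector matrix_matrix_mult_def sum.distrib[symmetric] field_simps)

lemma matrix_diff_conj:
  "S ** (X - Y) ** T = S ** X ** T - S ** Y ** (T :: 'a::comm_ring_1^'n^'n)"
  by (vector matrix_matrix_mult_def sum_subtractf left_diff_distrib right_diff_distrib)

lemma matrix_sum_conj:
  "S ** (\<Sum>k\<in>K. f k) ** T = (\<Sum>k\<in>K. S ** f k ** (T :: 'a::semiring_1^'n^'n))"
  by (induction K rule: infinite_finite_induct) (simp_all add: matrix_add_ldistrib matrix_add_rdistrib)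

lemma mat_matrix_mul_commute: "mat c ** A = A ** (mat c :: 'a::comm_semiring_1^'n^'n)"
  by (simp add: matrix_matrix_mult_def mat_def vec_eq_iff if_distrib if_distribR mult.commute
      cong: if_cong)

lemma unitary_mat_right: "unitary_mat U \<Longrightarrow> U ** adj U = mat (1 :: complex)"
  unfolding unitary_mat_def using matrix_left_right_inverse by blast

lemma unitary_mat_adj: "unitary_mat U \<Longrightarrow> unitary_mat (adj (U :: complex^'n^'n))"
  using unitary_mat_right unfolding unitary_mat_def by simp

lemma unitary_mat_mult:
  "unitary_mat U \<Longrightarrow> unitary_mat V \<Longrightarrow> unitary_mat (U ** (V :: complex^'n^'n))"
  unfolding unitary_mat_def adj_matrix_mul by (metis matrix_mul_assoc matrix_mul_lid)

lemma unitarily_similarI_common_conj: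
  fixes A B :: "complex^'n^'n"
  assumes U: "unitary_mat U" and V: "unitary_mat V" and eq: "adj U ** A ** U = adj V ** B ** V"
  shows "unitarily_similar A B"
proof -
  have "V ** (adj V ** B ** V) ** adj V = (V ** adj V) ** B ** (V ** adj V)"
    by (simp add: matrix_mul_assoc)
  then have "B = V ** (adj V ** B ** V) ** adj V"
    using unitary_mat_right[OF V] by simp
  also have "\<dots> = adj (U ** adj V) ** A ** (U ** adj V)"
    unfolding eq[symmetric] adj_matrix_mul by (simp add: matrix_mul_assoc)
  finally show ?thesis
    using unitary_mat_mult[OF U unitary_mat_adj[OF V]] unfolding unitarily_similar_def by blast
qed

lemma unitary_conj_mat: "unitary_mat U \<Longrightarrow> adj U ** mat c ** U = mat (c :: complex)"
  unfolding unitary_mat_def by (metis mat_matrix_mul_commute matrix_mul_assoc matrix_mul_lid)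

lemma trace_unitary_conj: "unitary_mat U \<Longrightarrow> trace (adj U ** A ** U) = trace (A :: complex^'n^'n)"
  using unitary_mat_right[of U] trace_mul_sym[of "adj U ** A" U]
  by (simp add: matrix_mul_assoc)

lemma det_unitary_conj: "unitary_mat U \<Longrightarrow> det (adj U ** A ** U) = det (A :: complex^'n^'n)"
  using det_mul[of "adj U" U] unfolding unitary_mat_def by (simp add: det_mul)

definition frob_sq :: "complex^'n^'n \<Rightarrow> real" where
  "frob_sq M = (\<Sum>i\<in>UNIV. \<Sum>j\<in>UNIV. (cmod (M $ i $ j))^2)"

lemma frob_sq_nonneg: "0 \<le> frob_sq M"
  by (simp add: frob_sq_def sum_nonneg)

lemma trace_mul_adj: "trace (M ** adj M) = of_real (frob_sq M)"
  unfolding frob_sq_def of_real_sum complex_norm_square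
  by (simp add: trace_def matrix_matrix_mult_def adj_def)

lemma frob_sq_unitary_conj:
  assumes "unitary_mat U"
  shows "frob_sq (adj U ** A ** U) = frob_sq A"
proof -
  have "(adj U ** A ** U) ** adj (adj U ** A ** U) = adj U ** (A ** adj A) ** U"
    using unitary_mat_right[OF assms] unfolding adj_matrix_mul adj_adj
    by (metis matrix_mul_assoc matrix_mul_lid)
  then have "complex_of_real (frob_sq (adj U ** A ** U)) = complex_of_real (frob_sq A)"
    unfolding trace_mul_adj[symmetric] using trace_unitary_conj[OF assms] by simp
  then show ?thesis
    using of_real_eq_iff by blast
qed

lemma mat_pow_0 [simp]: "mat_pow A 0 = mat 1"
  by (simp add: mat_pow_def)

lemma mat_pow_Suc [simp]: "mat_pow A (Suc k) = A ** mat_pow A k"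
  by (simp add: mat_pow_def)

lemma mat_pow_unitary_conj:
  assumes "unitary_mat U"
  shows "mat_pow (adj U ** A ** U) k = adj U ** mat_pow A k ** U"
proof (induction k)
  case 0
  then show ?case
    using assms unfolding unitary_mat_def by simp
next
  case (Suc k)
  have "mat_pow (adj U ** A ** U) (Suc k) = adj U ** A ** (U ** adj U) ** mat_pow A k ** U"
    using Suc by (simp add: matrix_mul_assoc)
  then show ?case
    using unitary_mat_right[OF assms] by (simp add: matrix_mul_assoc)
qed

lemma poly_mat_unitary_conj:
  assumes "unitary_mat U"
  shows "poly_mat p (adj U ** A ** U) = adj U ** poly_mat p A ** U"
proof -
  have "adj U ** (mat c ** X) ** U = mat c ** (adj U ** X ** U)" for c X
    by (metis mat_matrix_mul_commute matrix_mul_assoc)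
  then show ?thesis
    unfolding poly_mat_def matrix_sum_conj mat_pow_unitary_conj[OF assms] by simp
qed

lemma poly_mat_linear: "poly_mat [:c0, c1:] M = mat c0 + mat c1 ** M"
  by (cases "c1 = 0") (simp_all add: poly_mat_def)

lemma poly_mat_quadratic: "poly_mat [:c0, c1, 1:] M = mat c0 + mat c1 ** M + M ** M"
  by (simp add: poly_mat_def numeral_2_eq_2)

lemma order_prod_linear_factors:
  "order a (\<Prod>b\<in>#m. [:- b, 1:]) = count m (a :: 'a::idom)"
proof (induction m)
  case empty
  then show ?case
    by simp
next
  case (add b m)
  have "order a (\<Prod>c\<in>#add_mset b m. [:- c, 1:]) = order a ([:- b, 1:] * (\<Prod>c\<in>#m. [:- c, 1:]))"
    by (simp only: image_mset_add_mset prod_mset.add_mset)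
  also have "\<dots> = order a [:- b, 1:] + order a (\<Prod>c\<in>#m. [:- c, 1:])"
    by (rule order_mult) (auto simp: prod_mset_zero_iff simp del: mult_pCons_left)
  also have "order a [:- b, 1:] = (if a = b then 1 else 0)"
    using order_power_n_n[of a 1] by (auto intro: order_0I)
  finally show ?case
    using add by simp
qed

lemma eig_mset_eqI:
  fixes N :: "complex^'n^'n"
  assumes "size m = CARD('n)" "charpoly N = (\<Prod>a\<in>#m. [:- a, 1:])"
  shows "eig_mset N = m"
  unfolding eig_mset_def
proof (rule the_equality)
  fix m'
  assume "size m' = CARD('n) \<and> charpoly N = (\<Prod>a\<in>#m'. [:- a, 1:])"
  then show "m' = m"
    using assms(2) order_prod_linear_factors by (metis multiset_eqI)
qed (use assms in simp)

lemma spec_norm_nonneg: "0 \<le> spec_norm M"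
  unfolding spec_norm_def by (rule onorm_pos_le[OF matrix_vector_mul_bounded_linear])

lemma spec_norm_eq_0_iff: "spec_norm M = 0 \<longleftrightarrow> M = 0"
  unfolding spec_norm_def
  by (simp add: onorm_eq_0 matrix_vector_mul_bounded_linear matrix_eq[of M 0])

lemma matrix_inv_inverse:
  fixes M :: "'a::field^'n^'n"
  assumes "invertible M"
  shows "M ** matrix_inv M = mat 1" "matrix_inv M ** M = mat 1"
  using someI_ex[OF assms[unfolded invertible_def]] unfolding matrix_inv_def by auto

lemma matrix_inv_eqI:
  fixes M X :: "'a::field^'n^'n"
  assumes "M ** X = mat 1"
  shows "matrix_inv M = X"
proof -
  have "invertible M"
    using assms invertible_right_inverse by blast
  have "matrix_inv M = matrix_inv M ** (M ** X)"
    using assms by simp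
  also have "\<dots> = (matrix_inv M ** M) ** X"
    by (simp add: matrix_mul_assoc)
  also have "\<dots> = X"
    using matrix_inv_inverse(2)[OF \<open>invertible M\<close>] by simp
  finally show ?thesis .
qed

lemma det_matrix_inv: "det M \<noteq> 0 \<Longrightarrow> det (matrix_inv M) = 1 / det (M :: 'a::field^'n^'n)"
  using det_mul[of M "matrix_inv M"] matrix_inv_inverse(1)[of M] by (simp add: invertible_det_nz field_simps)

lemma resolvent_norm_eq_infinity_iff: "resolvent_norm T z = \<infinity> \<longleftrightarrow> det (mat z - T) = 0"
  unfolding resolvent_norm_def invertible_det_nz by simp

lemma resolvent_norm_finite:
  "det (mat z - T) \<noteq> 0 \<Longrightarrow> resolvent_norm T z = ereal (spec_norm (matrix_inv (mat z - T)))"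
  unfolding resolvent_norm_def invertible_det_nz by simp

definition mat2 :: "complex \<Rightarrow> complex \<Rightarrow> complex \<Rightarrow> complex \<Rightarrow> complex^2^2" where
  "mat2 a b c d = (\<chi> i j. if i = 1 then if j = 1 then a else b else if j = 1 then c else d)"

definition vec2 :: "complex \<Rightarrow> complex \<Rightarrow> complex^2" where
  "vec2 x y = (\<chi> i. if i = 1 then x else y)"

lemma mat2_nth [simp]:
  "mat2 a b c d $ 1 $ 1 = a" "mat2 a b c d $ 1 $ 2 = b"
  "mat2 a b c d $ 2 $ 1 = c" "mat2 a b c d $ 2 $ 2 = d"
  by (simp_all add: mat2_def)

lemma vec2_nth [simp]: "vec2 x y $ 1 = x" "vec2 x y $ 2 = y"
  by (simp_all add: vec2_def)

lemma mat2_cases: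
  fixes M :: "complex^2^2"
  obtains a b c d where "M = mat2 a b c d"
  using that[of "M$1$1" "M$1$2" "M$2$1" "M$2$2"] by (simp add: vec_eq_iff forall_2)

lemma vec2_cases:
  fixes v :: "complex^2"
  obtains x y where "v = vec2 x y"
  using that[of "v$1" "v$2"] by (simp add: vec_eq_iff forall_2)

lemma mat2_eq_iff [simp]:
  "mat2 a b c d = mat2 a' b' c' d' \<longleftrightarrow> a = a' \<and> b = b' \<and> c = c' \<and> d = d'"
  by (auto simp add: vec_eq_iff forall_2)

lemma vec2_eq_iff [simp]: "vec2 x y = vec2 x' y' \<longleftrightarrow> x = x' \<and> y = y'"
  by (auto simp add: vec_eq_iff forall_2)

lemma mat_eq_mat2: "mat z = mat2 z 0 0 z"
  by (simp add: vec_eq_iff forall_2 mat_def)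

lemma zero_eq_mat2: "0 = mat2 0 0 0 0"
  by (simp add: vec_eq_iff forall_2)

lemma zero_eq_vec2: "0 = vec2 0 0"
  by (simp add: vec_eq_iff forall_2)

lemma mat2_mult [simp]:
  "mat2 a b c d ** mat2 a' b' c' d' =
     mat2 (a*a' + b*c') (a*b' + b*d') (c*a' + d*c') (c*b' + d*d')"
  by (simp add: vec_eq_iff forall_2 matrix_matrix_mult_def sum_2)

lemma mat2_mult_vec2 [simp]: "mat2 a b c d *v vec2 x y = vec2 (a*x + b*y) (c*x + d*y)"
  by (simp add: vec_eq_iff forall_2 matrix_vector_mult_def sum_2)

lemma mat2_diff [simp]: "mat2 a b c d - mat2 a' b' c' d' = mat2 (a-a') (b-b') (c-c') (d-d')"
  by (simp add: vec_eq_iff forall_2)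

lemma mat2_add [simp]: "mat2 a b c d + mat2 a' b' c' d' = mat2 (a+a') (b+b') (c+c') (d+d')"
  by (simp add: vec_eq_iff forall_2)

lemma adj_mat2 [simp]: "adj (mat2 a b c d) = mat2 (cnj a) (cnj c) (cnj b) (cnj d)"
  by (simp add: vec_eq_iff forall_2 adj_def)

lemma det_mat2 [simp]: "det (mat2 a b c d) = a*d - b*c"
  by (simp add: det_2)

lemma trace_mat2 [simp]: "trace (mat2 a b c d) = a + d"
  by (simp add: trace_def sum_2)

lemma frob_sq_mat2 [simp]:
  "frob_sq (mat2 a b c d) = (cmod a)^2 + (cmod b)^2 + (cmod c)^2 + (cmod d)^2"
  by (simp add: frob_sq_def UNIV_2)

lemma norm_vec2_sq: "(norm (vec2 x y))^2 = (cmod x)^2 + (cmod y)^2"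
  by (simp add: norm_vec_def L2_set_def sum_2)

section \<open>The spectral norm and the singular values of a \<open>2 \<times> 2\<close> matrix\<close>

text \<open>The eigenvalues of \<open>adj M ** M\<close>, i.e. the roots of \<open>t\<^sup>2 - frob_sq M * t + cmod (det M)\<^sup>2\<close>.\<close>

definition gram_eig_max :: "complex^2^2 \<Rightarrow> real" where
  "gram_eig_max M = (frob_sq M + sqrt ((frob_sq M)^2 - 4 * (cmod (det M))^2)) / 2"

definition gram_eig_min :: "complex^2^2 \<Rightarrow> real" where
  "gram_eig_min M = (frob_sq M - sqrt ((frob_sq M)^2 - 4 * (cmod (det M))^2)) / 2"

lemma two_cmod_det_le_frob_sq: "2 * cmod (det M) \<le> frob_sq (M :: complex^2^2)"
proof -
  obtain a b c d where M: "M = mat2 a b c d"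
    by (rule mat2_cases)
  have "cmod (a*d - b*c) \<le> cmod a * cmod d + cmod b * cmod c"
    by (metis norm_mult norm_triangle_ineq4)
  moreover have "2 * (cmod a * cmod d) \<le> (cmod a)^2 + (cmod d)^2"
    using sum_squares_bound[of "cmod a" "cmod d"] by (simp add: power2_eq_square)
  moreover have "2 * (cmod b * cmod c) \<le> (cmod b)^2 + (cmod c)^2"
    using sum_squares_bound[of "cmod b" "cmod c"] by (simp add: power2_eq_square)
  ultimately show ?thesis
    unfolding M by simp
qed

lemma gram_discriminant_nonneg: "0 \<le> (frob_sq M)^2 - 4 * (cmod (det (M :: complex^2^2)))^2"
proof -
  have "(2 * cmod (det M))^2 \<le> (frob_sq M)^2"
    using two_cmod_det_le_frob_sq[of M] by (intro power_mono) simp_all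
  moreover have "(2 * cmod (det M))^2 = 4 * (cmod (det M))^2"
    by (simp add: power_mult_distrib)
  ultimately show ?thesis
    by linarith
qed

lemma gram_eig_max_add_min: "gram_eig_max M + gram_eig_min M = frob_sq M"
  by (simp add: gram_eig_max_def gram_eig_min_def field_simps)

lemma gram_eig_max_mult_min: "gram_eig_max M * gram_eig_min M = (cmod (det M))^2"
  using gram_discriminant_nonneg[of M]
  by (simp add: gram_eig_max_def gram_eig_min_def field_simps power2_eq_square)

lemma gram_eig_min_nonneg: "0 \<le> gram_eig_min M"
proof -
  have "sqrt ((frob_sq M)^2 - 4 * (cmod (det M))^2) \<le> sqrt ((frob_sq M)^2)"
    by (rule real_sqrt_le_mono) simp
  also have "\<dots> = frob_sq M"
    using frob_sq_nonneg[of M] by simp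
  finally show ?thesis
    unfolding gram_eig_min_def by simp
qed

lemma gram_eig_min_le_max: "gram_eig_min M \<le> gram_eig_max M"
  using gram_discriminant_nonneg[of M] by (simp add: gram_eig_max_def gram_eig_min_def)

lemma gram_eig_max_nonneg: "0 \<le> gram_eig_max M"
  using gram_eig_min_nonneg gram_eig_min_le_max order_trans by blast

lemma le_upper_root_if_quadratic_nonpos:
  fixes F D u w :: real
  assumes "0 \<le> u" "0 \<le> D" "2 * D \<le> F" "w^2 - F*u*w + D^2*u^2 \<le> 0"
  shows "w \<le> (F + sqrt (F^2 - 4*D^2)) / 2 * u"
proof (rule ccontr)
  define s where "s = sqrt (F^2 - 4*D^2)"
  have "0 \<le> F^2 - 4*D^2"
    using power_mono[OF assms(3), of 2] assms(2) by (simp add: power_mult_distrib)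
  then have s2: "s^2 = F^2 - 4*D^2" and s0: "0 \<le> s"
    unfolding s_def by simp_all
  assume "\<not> ?thesis"
  then have "w - (F + s)/2 * u > 0"
    unfolding s_def by simp
  moreover have "w - (F - s)/2 * u \<ge> w - (F + s)/2 * u"
    using s0 assms(1) by (simp add: algebra_simps mult_left_mono)
  ultimately have "(w - (F + s)/2 * u) * (w - (F - s)/2 * u) > 0"
    by (meson less_le_trans mult_pos_pos)
  moreover have "(w - (F + s)/2 * u) * (w - (F - s)/2 * u) = w^2 - F*u*w + (F^2 - s^2)/4 * u^2"
    by (simp add: field_simps power2_eq_square)
  moreover have "(F^2 - s^2)/4 = D^2"
    using s2 by simp
  ultimately show False
    using assms(4) by simp
qed

lemma lagrange_identity_complex:
  fixes y1 y2 z1 z2 :: complex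
  shows "((cmod y1)^2 + (cmod y2)^2) * ((cmod z1)^2 + (cmod z2)^2) =
     (cmod (y1*z2 - y2*z1))^2 + (cmod (cnj y1 * z1 + cnj y2 * z2))^2"
proof -
  have "complex_of_real (((cmod y1)^2 + (cmod y2)^2) * ((cmod z1)^2 + (cmod z2)^2)) =
     complex_of_real ((cmod (y1*z2 - y2*z1))^2 + (cmod (cnj y1 * z1 + cnj y2 * z2))^2)"
    unfolding of_real_add of_real_mult complex_norm_square by (simp add: algebra_simps)
  then show ?thesis
    using of_real_eq_iff by blast
qed

text \<open>Besides \<open>y = M x\<close> consider \<open>y' = M x'\<close> for the vector \<open>x'\<close> orthogonal to \<open>x\<close> of the same
  length.  Then \<open>|y|\<^sup>2 + |y'|\<^sup>2 = frob_sq M |x|\<^sup>2\<close> and \<open>det [y y'] = det M |x|\<^sup>2\<close>, so by Lagrange's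
  identity \<open>w = |y|\<^sup>2\<close> satisfies \<open>w (frob_sq M |x|\<^sup>2 - w) \<ge> |det M|\<^sup>2 |x|\<^sup>4\<close>.\<close>

lemma norm_mult_vec_sq_le: "(norm (M *v x))^2 \<le> gram_eig_max M * (norm x)^2"
proof -
  obtain a b c d where M: "M = mat2 a b c d"
    by (rule mat2_cases)
  obtain x1 x2 where x: "x = vec2 x1 x2"
    by (rule vec2_cases)
  define y1 y2 where "y1 = a*x1 + b*x2" and "y2 = c*x1 + d*x2"
  define z1 z2 where "z1 = a*(-cnj x2) + b*cnj x1" and "z2 = c*(-cnj x2) + d*cnj x1"
  define u w Z where "u = (cmod x1)^2 + (cmod x2)^2" and "w = (cmod y1)^2 + (cmod y2)^2"
    and "Z = (cmod z1)^2 + (cmod z2)^2"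
  define F D where "F = frob_sq M" and "D = cmod (det M)"
  have "complex_of_real (F * u) = complex_of_real (w + Z)"
    unfolding M F_def u_def w_def Z_def y1_def y2_def z1_def z2_def
    unfolding frob_sq_mat2 of_real_add of_real_mult complex_norm_square by (simp add: algebra_simps)
  then have frob: "F * u = w + Z"
    using of_real_eq_iff by blast
  have "y1*z2 - y2*z1 = det M * complex_of_real u"
    unfolding M u_def y1_def y2_def z1_def z2_def of_real_add complex_norm_square
    by (simp add: algebra_simps)
  moreover have "0 \<le> u"
    unfolding u_def by simp
  ultimately have det: "D * u = cmod (y1*z2 - y2*z1)"
    unfolding D_def by (simp add: norm_mult)
  have "w^2 - F*u*w + D^2*u^2 = (D*u)^2 - w * Z"
    using frob by (simp add: algebra_simps power2_eq_square)
  also have "\<dots> = - ((cmod (cnj y1 * z1 + cnj y2 * z2))^2)"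
    unfolding det w_def Z_def lagrange_identity_complex by simp
  finally have "w^2 - F*u*w + D^2*u^2 \<le> 0"
    by simp
  then have "w \<le> (F + sqrt (F^2 - 4*D^2)) / 2 * u"
    using le_upper_root_if_quadratic_nonpos[of u D F w] two_cmod_det_le_frob_sq[of M]
    unfolding u_def F_def D_def by simp
  then show ?thesis
    unfolding x w_def u_def y1_def y2_def F_def D_def gram_eig_max_def M
    by (simp add: norm_vec2_sq)
qed

text \<open>Writing \<open>adj M ** M = [[p, q], [cnj q, r]]\<close>, the vector \<open>(q, R - p)\<close> is an eigenvector for
  its largest eigenvalue \<open>R\<close>, unless it vanishes, in which case \<open>(1, 0)\<close> is one.\<close>

lemma exists_norm_mult_vec_sq_eq:
  "\<exists>x. x \<noteq> 0 \<and> (norm (M *v x))^2 = gram_eig_max M * (norm x)^2"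
proof -
  obtain a b c d where M: "M = mat2 a b c d"
    by (rule mat2_cases)
  define p r q where "p = (cmod a)^2 + (cmod c)^2" and "r = (cmod b)^2 + (cmod d)^2"
    and "q = cnj a * b + cnj c * d"
  define R s where "R = gram_eig_max M" and "s = gram_eig_max M - p"
  have "complex_of_real (p * r - (cmod q)^2) = complex_of_real ((cmod (det M))^2)"
    unfolding M p_def r_def q_def of_real_add of_real_mult of_real_diff complex_norm_square
    by (simp add: algebra_simps)
  then have "p * r - (cmod q)^2 = (cmod (det M))^2"
    using of_real_eq_iff by blast
  moreover have "R^2 - frob_sq M * R + (cmod (det M))^2 = 0"
    unfolding R_def gram_eig_max_add_min[symmetric] gram_eig_max_mult_min[symmetric]
    by (simp add: algebra_simps power2_eq_square)
  moreover have "frob_sq M = p + r"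
    unfolding M p_def r_def by simp
  ultimately have qs: "(cmod q)^2 = s * (R - r)"
    unfolding s_def R_def by (simp add: algebra_simps power2_eq_square)
  show ?thesis
  proof (cases "q = 0 \<and> s = 0")
    case True
    then have "(norm (M *v vec2 1 0))^2 = R * (norm (vec2 1 (0::complex)))^2"
      unfolding M s_def R_def p_def by (simp add: norm_vec2_sq)
    then show ?thesis
      unfolding R_def by (metis vec2_eq_iff zero_eq_vec2 zero_neq_one)
  next
    case False
    define x where "x = vec2 q (complex_of_real s)"
    have "x \<noteq> 0"
      using False unfolding x_def zero_eq_vec2 by simp
    have "complex_of_real ((norm (M *v x))^2) =
        complex_of_real ((cmod q)^2 * (p + 2 * s) + s^2 * r)"
      unfolding M x_def norm_vec2_sq mat2_mult_vec2 of_real_add of_real_mult complex_norm_square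
        p_def r_def q_def
      by (simp add: algebra_simps power2_eq_square)
    then have "(norm (M *v x))^2 = (cmod q)^2 * (p + 2 * s) + s^2 * r"
      using of_real_eq_iff by blast
    also have "\<dots> = R * ((cmod q)^2 + s^2)"
      unfolding qs s_def R_def by (simp add: algebra_simps power2_eq_square)
    also have "\<dots> = R * (norm x)^2"
      unfolding x_def norm_vec2_sq by simp
    finally show ?thesis
      using \<open>x \<noteq> 0\<close> unfolding R_def by blast
  qed
qed

lemma spec_norm_2: "spec_norm M = sqrt (gram_eig_max M)"
proof (rule antisym)
  show "spec_norm M \<le> sqrt (gram_eig_max M)"
    unfolding spec_norm_def
  proof (rule onorm_le)
    fix x
    have "norm (M *v x) = sqrt ((norm (M *v x))^2)"
      by simp
    also have "\<dots> \<le> sqrt (gram_eig_max M * (norm x)^2)"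
      using norm_mult_vec_sq_le by (rule real_sqrt_le_mono)
    finally show "norm (M *v x) \<le> sqrt (gram_eig_max M) * norm x"
      by (simp add: real_sqrt_mult)
  qed
next
  obtain x where x: "x \<noteq> 0" "(norm (M *v x))^2 = gram_eig_max M * (norm x)^2"
    using exists_norm_mult_vec_sq_eq by blast
  have "norm (M *v x) = sqrt (gram_eig_max M) * norm x"
    using arg_cong[OF x(2), of sqrt] by (simp add: real_sqrt_mult)
  moreover have "norm (M *v x) \<le> spec_norm M * norm x"
    unfolding spec_norm_def using matrix_vector_mul_bounded_linear by (rule onorm)
  ultimately show "sqrt (gram_eig_max M) \<le> spec_norm M"
    using x(1) by simp
qed

lemma frob_sq_eq_spec_norm_det:
  fixes M :: "complex^2^2"
  assumes "0 < spec_norm M"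
  shows "frob_sq M = (spec_norm M)^2 + (cmod (det M))^2 / (spec_norm M)^2"
proof -
  have "0 < gram_eig_max M"
    using assms unfolding spec_norm_2 by simp
  then show ?thesis
    unfolding spec_norm_2 gram_eig_max_add_min[symmetric] gram_eig_max_mult_min[symmetric]
    by (simp add: field_simps)
qed

lemma charpoly_2: "charpoly (N :: complex^2^2) = [:det N, - trace N, 1:]"
proof -
  have "charpoly N = ([:0, 1:] - [:N$1$1:]) * ([:0, 1:] - [:N$2$2:]) - [:N$1$2:] * [:N$2$1:]"
    unfolding charpoly_def det_2 by (simp add: mat_def)
  then show ?thesis
    by (simp add: det_2 trace_def sum_2 algebra_simps)
qed

lemma charpoly_adj_mult_self:
  "charpoly (adj M ** M) =
     [:- complex_of_real (gram_eig_max M), 1:] * [:- complex_of_real (gram_eig_min M), 1:]"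
proof -
  obtain a b c d where M: "M = mat2 a b c d"
    by (rule mat2_cases)
  have "trace (adj M ** M) = complex_of_real (frob_sq M)"
    unfolding M frob_sq_mat2 of_real_add complex_norm_square by (simp add: mult.commute)
  moreover have "det (adj M ** M) = complex_of_real ((cmod (det M))^2)"
    unfolding M complex_norm_square by (simp add: algebra_simps)
  ultimately show ?thesis
    unfolding charpoly_2 gram_eig_max_add_min[symmetric] gram_eig_max_mult_min[symmetric]
    by (simp add: algebra_simps)
qed

lemma singular_values_2: "singular_values M = [sqrt (gram_eig_max M), sqrt (gram_eig_min M)]"
proof -
  have "eig_mset (adj M ** M) =
      {# complex_of_real (gram_eig_max M), complex_of_real (gram_eig_min M) #}"
    by (rule eig_mset_eqI) (simp_all add: charpoly_adj_mult_self)
  then show ?thesis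
    using gram_eig_min_le_max[of M] unfolding singular_values_def
    by (auto simp: add_mset_commute)
qed

lemma sing_val_2:
  "sing_val M 1 = sqrt (gram_eig_max M)" "sing_val M 2 = sqrt (gram_eig_min M)"
  unfolding sing_val_def singular_values_2 by simp_all

lemma gram_eig_min_eq_0_iff: "gram_eig_min M = 0 \<longleftrightarrow> det M = 0"
  using gram_eig_max_mult_min[of M] gram_eig_min_nonneg[of M] gram_eig_min_le_max[of M]
  by (metis mult_eq_0_iff order_antisym norm_eq_zero power_not_zero power_zero_numeral)

section \<open>Unitary similarity of \<open>2 \<times> 2\<close> matrices\<close>

lemma spec_norm_unitary_conj:
  fixes A :: "complex^2^2"
  shows "unitary_mat U \<Longrightarrow> spec_norm (adj U ** A ** U) = spec_norm A"
  unfolding spec_norm_2 gram_eig_max_def by (simp add: frob_sq_unitary_conj det_unitary_conj)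

lemma singular_values_unitary_conj:
  fixes A :: "complex^2^2"
  shows "unitary_mat U \<Longrightarrow> singular_values (adj U ** A ** U) = singular_values A"
  unfolding singular_values_2 gram_eig_max_def gram_eig_min_def
  by (simp add: frob_sq_unitary_conj det_unitary_conj)

lemma exists_unit_eigenvector:
  fixes a b c d l :: complex
  assumes "l^2 - (a + d) * l + (a*d - b*c) = 0"
  shows "\<exists>e1 e2. (cmod e1)^2 + (cmod e2)^2 = 1 \<and> a*e1 + b*e2 = l*e1 \<and> c*e1 + d*e2 = l*e2"
proof -
  have "\<exists>w1 w2. (w1 \<noteq> 0 \<or> w2 \<noteq> 0) \<and> a*w1 + b*w2 = l*w1 \<and> c*w1 + d*w2 = l*w2"
  proof (cases "b \<noteq> 0 \<or> l \<noteq> a")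
    case True
    have "c*b + d*(l - a) = l*(l - a)"
      using assms by (simp add: algebra_simps power2_eq_square)
    then show ?thesis
      using True by (intro exI[of _ b] exI[of _ "l - a"]) (auto simp: algebra_simps)
  next
    case False
    show ?thesis
    proof (cases "c \<noteq> 0 \<or> l \<noteq> d")
      case True
      then show ?thesis
        using False by (intro exI[of _ "l - d"] exI[of _ c]) (auto simp: algebra_simps)
    next
      case False
      then show ?thesis
        using \<open>\<not> (b \<noteq> 0 \<or> l \<noteq> a)\<close> by (intro exI[of _ 1] exI[of _ 0]) auto
    qed
  qed
  then obtain w1 w2 where w: "w1 \<noteq> 0 \<or> w2 \<noteq> 0" "a*w1 + b*w2 = l*w1" "c*w1 + d*w2 = l*w2"
    by blast
  define n where "n = sqrt ((cmod w1)^2 + (cmod w2)^2)"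
  have pos: "(cmod w1)^2 + (cmod w2)^2 > 0"
    using w(1) by (cases "w1 = 0") (simp_all add: add_pos_nonneg)
  then have "n > 0" and n2: "n^2 = (cmod w1)^2 + (cmod w2)^2"
    unfolding n_def by simp_all
  have "(cmod (w1 / n))^2 + (cmod (w2 / n))^2 = ((cmod w1)^2 + (cmod w2)^2) / n^2"
    by (simp add: norm_divide power_divide add_divide_distrib)
  also have "\<dots> = 1"
    unfolding n2 by (rule divide_self) (use pos in linarith)
  finally have "(cmod (w1 / n))^2 + (cmod (w2 / n))^2 = 1" .
  moreover have "a * (w1 / n) + b * (w2 / n) = l * (w1 / n)" "c * (w1 / n) + d * (w2 / n) = l * (w2 / n)"
    using w(2,3) by (simp_all add: add_divide_distrib[symmetric])
  ultimately show ?thesis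
    by blast
qed

lemma cis_minus_Arg_mult: "cis (- Arg z) * z = of_real (cmod z)"
proof -
  have "cis (- Arg z) * z = cis (- Arg z) * rcis (cmod z) (Arg z)"
    by (simp add: rcis_cmod_Arg)
  also have "\<dots> = of_real (cmod z)"
    by (simp add: rcis_def cis_mult mult.left_commute)
  finally show ?thesis .
qed

lemma cnj_mult_self_add_eq_1:
  assumes "(cmod e1)^2 + (cmod e2)^2 = 1"
  shows "cnj e1 * e1 + cnj e2 * e2 = 1"
proof -
  have "complex_of_real ((cmod e1)^2 + (cmod e2)^2) = 1"
    using assms by simp
  then show ?thesis
    unfolding of_real_add complex_norm_square by (simp add: mult.commute)
qed

lemma unitary_mat2_completion:
  assumes "(cmod e1)^2 + (cmod e2)^2 = 1" "cmod \<omega> = 1"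
  shows "unitary_mat (mat2 e1 (- \<omega> * cnj e2) e2 (\<omega> * cnj e1))"
proof -
  have e: "cnj e1 * e1 + cnj e2 * e2 = 1" and \<omega>: "cnj \<omega> * \<omega> = 1"
    using cnj_mult_self_add_eq_1[OF assms(1)] cnj_mult_self_add_eq_1[of \<omega> 0] assms(2)
    by (simp_all add: mult.commute)
  have "cnj \<omega> * \<omega> * (cnj e1 * e1 + cnj e2 * e2) = 1"
    unfolding e \<omega> by simp
  then show ?thesis
    unfolding unitary_mat_def mat_eq_mat2 using e by (simp add: algebra_simps)
qed

lemma schur_2:
  fixes A :: "complex^2^2"
  assumes "l^2 - trace A * l + det A = 0"
  obtains U c where "unitary_mat U" "0 \<le> c" "adj U ** A ** U = mat2 l (of_real c) 0 (trace A - l)"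
proof -
  obtain a b c d where A: "A = mat2 a b c d"
    by (rule mat2_cases)
  obtain e1 e2 where e: "(cmod e1)^2 + (cmod e2)^2 = 1" "a*e1 + b*e2 = l*e1" "c*e1 + d*e2 = l*e2"
    using exists_unit_eigenvector[of l a d b c] assms unfolding A by auto
  have e_norm: "cnj e1 * e1 + cnj e2 * e2 = 1"
    using e(1) by (rule cnj_mult_self_add_eq_1)
  define w where "w = cnj e1 * (- a * cnj e2 + b * cnj e1) + cnj e2 * (- c * cnj e2 + d * cnj e1)"
  define \<omega> where "\<omega> = cis (- Arg w)"
  have \<omega>w: "\<omega> * w = of_real (cmod w)"
    unfolding \<omega>_def by (rule cis_minus_Arg_mult)
  \<comment> \<open>The phase \<open>\<omega>\<close> of the second column makes the upper right entry of \<open>adj U ** A ** U\<close> real and nonnegative.\<close>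
  define U where "U = mat2 e1 (- \<omega> * cnj e2) e2 (\<omega> * cnj e1)"
  have U: "unitary_mat U"
    unfolding U_def using e(1) by (rule unitary_mat2_completion) (simp add: \<omega>_def)
  define T where "T = adj U ** A ** U"
  have "T $ 1 $ 1 = cnj e1 * (a*e1 + b*e2) + cnj e2 * (c*e1 + d*e2)"
    unfolding T_def U_def A by (simp add: algebra_simps)
  also have "\<dots> = l * (cnj e1 * e1 + cnj e2 * e2)"
    unfolding e(2,3) by (simp add: algebra_simps)
  finally have T11: "T $ 1 $ 1 = l"
    using e_norm by simp
  have "T $ 2 $ 1 = cnj \<omega> * (e1 * (c*e1 + d*e2) - e2 * (a*e1 + b*e2))"
    unfolding T_def U_def A by (simp add: algebra_simps)
  then have T21: "T $ 2 $ 1 = 0"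
    unfolding e(2,3) by (simp add: algebra_simps)
  have "T $ 1 $ 2 = \<omega> * w"
    unfolding T_def U_def A w_def by (simp add: algebra_simps)
  with \<omega>w have T12: "T $ 1 $ 2 = of_real (cmod w)"
    by simp
  have "T $ 1 $ 1 + T $ 2 $ 2 = trace A"
    using trace_unitary_conj[OF U, of A] by (simp add: T_def trace_def sum_2)
  then have T22: "T $ 2 $ 2 = trace A - l"
    unfolding T11 by (metis add_diff_cancel_left')
  have "T = mat2 l (of_real (cmod w)) 0 (trace A - l)"
    using T11 T12 T21 T22 by (simp add: vec_eq_iff forall_2)
  then show ?thesis
    using that[OF U, of "cmod w"] unfolding T_def by simp
qed

lemma unitarily_similar_if_trace_det_frob_sq_eq:
  fixes A B :: "complex^2^2"
  assumes t: "trace A = trace B" and d: "det A = det B" and f: "frob_sq A = frob_sq B"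
  shows "unitarily_similar A B"
proof -
  define s where "s = csqrt ((trace A)^2 - 4 * det A)"
  define l where "l = (trace A + s) / 2"
  have "l^2 - trace A * l + det A = (s^2 - (trace A)^2) / 4 + det A"
    unfolding l_def by (simp add: field_simps power2_eq_square)
  then have lA: "l^2 - trace A * l + det A = 0"
    by (simp add: s_def)
  obtain U c where U: "unitary_mat U" "0 \<le> c" "adj U ** A ** U = mat2 l (of_real c) 0 (trace A - l)"
    using schur_2[OF lA] by blast
  obtain V c' where V: "unitary_mat V" "0 \<le> c'" "adj V ** B ** V = mat2 l (of_real c') 0 (trace A - l)"
    using schur_2[of l B] lA t d by auto
  have "frob_sq (mat2 l (of_real c) 0 (trace A - l)) = frob_sq (mat2 l (of_real c') 0 (trace A - l))"
    using frob_sq_unitary_conj[OF U(1), of A] frob_sq_unitary_conj[OF V(1), of B] U(3) V(3) f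
    by simp
  then have "c = c'"
    using U(2) V(2) by (simp add: power2_eq_iff_nonneg)
  then show ?thesis
    using unitarily_similarI_common_conj[OF U(1) V(1)] U(3) V(3) by simp
qed

section \<open>Eigenvalues, Frobenius norm and resolvent of a \<open>2 \<times> 2\<close> matrix\<close>

lemma det_mat_minus_2: "det (mat z - M) = z^2 - trace M * z + det (M :: complex^2^2)"
  by (cases M rule: mat2_cases) (simp add: mat_eq_mat2 algebra_simps power2_eq_square)

lemma det_mat_minus_factor_2:
  fixes M :: "complex^2^2"
  obtains l1 l2 where "\<And>z. det (mat z - M) = (z - l1) * (z - l2)"
    and "l1 + l2 = trace M" and "l1 * l2 = det M"
proof -
  define s where "s = csqrt ((trace M)^2 - 4 * det M)"
  define l1 l2 where "l1 = (trace M + s) / 2" and "l2 = (trace M - s) / 2"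
  have sum: "l1 + l2 = trace M"
    by (simp add: l1_def l2_def field_simps)
  have "l1 * l2 = ((trace M)^2 - s^2) / 4"
    by (simp add: l1_def l2_def field_simps power2_eq_square)
  then have prod: "l1 * l2 = det M"
    by (simp add: s_def)
  have "det (mat z - M) = (z - l1) * (z - l2)" for z
    unfolding det_mat_minus_2 sum[symmetric] prod[symmetric] by (simp add: algebra_simps power2_eq_square)
  then show ?thesis
    using that sum prod by blast
qed

lemma trace_det_eq_if_same_eigenvalues:
  fixes A B :: "complex^2^2"
  assumes "\<And>z. det (mat z - A) = 0 \<longleftrightarrow> det (mat z - B) = 0"
  shows "trace A = trace B \<and> det A = det B"
proof -
  obtain l1 l2 where l: "\<And>z. det (mat z - A) = (z - l1) * (z - l2)"
    and "l1 + l2 = trace A" "l1 * l2 = det A"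
    using det_mat_minus_factor_2[of A] by blast
  obtain m1 m2 where m: "\<And>z. det (mat z - B) = (z - m1) * (z - m2)"
    and "m1 + m2 = trace B" "m1 * m2 = det B"
    using det_mat_minus_factor_2[of B] by blast
  have roots: "(z - l1) * (z - l2) = 0 \<longleftrightarrow> (z - m1) * (z - m2) = 0" for z
    using assms[of z] unfolding l m .
  have "l1 = m1 \<or> l1 = m2" "l2 = m1 \<or> l2 = m2" "m1 = l1 \<or> m1 = l2" "m2 = l1 \<or> m2 = l2"
    using roots[of l1] roots[of l2] roots[of m1] roots[of m2] by simp_all
  then have "l1 + l2 = m1 + m2 \<and> l1 * l2 = m1 * m2"
    by (auto simp: mult.commute add.commute)
  then show ?thesis
    using \<open>l1 + l2 = trace A\<close> \<open>l1 * l2 = det A\<close> \<open>m1 + m2 = trace B\<close> \<open>m1 * m2 = det B\<close>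
    by simp
qed

lemma exists_non_eigenvalue: "\<exists>z. det (mat z - (M :: complex^2^2)) \<noteq> 0"
proof (rule ccontr)
  assume "\<not> ?thesis"
  then have "z^2 - trace M * z + det M = 0" for z
    unfolding det_mat_minus_2 by blast
  from this[of 0] this[of 1] this[of 2] show False
    by (simp add: power2_eq_square algebra_simps)
qed

lemma frob_sq_mat_minus:
  fixes M :: "complex^2^2"
  shows "complex_of_real (frob_sq (mat z - M)) =
     complex_of_real (frob_sq M) + 2 * z * cnj z - cnj z * trace M - z * cnj (trace M)"
proof -
  obtain a b c d where M: "M = mat2 a b c d"
    by (rule mat2_cases)
  show ?thesis
    unfolding M mat_eq_mat2 mat2_diff frob_sq_mat2 trace_mat2 of_real_add complex_norm_square
    by (simp add: algebra_simps)
qed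

lemma frob_sq_eq_if_shift_eq:
  fixes A B :: "complex^2^2"
  assumes "trace A = trace B" "frob_sq (mat z - A) = frob_sq (mat z - B)"
  shows "frob_sq A = frob_sq B"
  using frob_sq_mat_minus[of z A] frob_sq_mat_minus[of z B] assms of_real_eq_iff by simp

lemma matrix_inv_mat2:
  assumes "D \<noteq> 0" "D = a*d - b*c"
  shows "matrix_inv (mat2 a b c d) = mat2 (d / D) (- b / D) (- c / D) (a / D)"
  by (rule matrix_inv_eqI)
    (simp add: mat_eq_mat2 field_simps assms(1), simp add: assms(2) algebra_simps)

lemma frob_sq_matrix_inv:
  fixes M :: "complex^2^2"
  shows "det M \<noteq> 0 \<Longrightarrow> frob_sq (matrix_inv M) = frob_sq M / (cmod (det M))^2"
  by (cases M rule: mat2_cases)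
    (simp add: matrix_inv_mat2[OF _ refl] norm_divide power_divide add_divide_distrib)

lemma cayley_hamilton_2: "poly_mat [:det M, - trace M, 1:] M = (0 :: complex^2^2)"
  by (cases M rule: mat2_cases) (simp add: poly_mat_quadratic mat_eq_mat2 zero_eq_mat2 algebra_simps)

lemma matrix_inv_mat_minus_eq_poly_mat:
  fixes M :: "complex^2^2"
  assumes "det (mat z - M) \<noteq> 0"
  shows "matrix_inv (mat z - M) =
    poly_mat [:(z - trace M) / det (mat z - M), 1 / det (mat z - M):] M"
proof -
  obtain a b c d where M: "M = mat2 a b c d"
    by (rule mat2_cases)
  define D where "D = det (mat z - M)"
  have D: "D \<noteq> 0" "D = (z - a) * (z - d) - (- b) * (- c)"
    using assms unfolding D_def M mat_eq_mat2 by simp_all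
  have "matrix_inv (mat z - M) = mat2 ((z - d) / D) (- (- b) / D) (- (- c) / D) ((z - a) / D)"
    using matrix_inv_mat2[OF D] unfolding M mat_eq_mat2 by simp
  also have "\<dots> = poly_mat [:(z - trace M) / D, 1 / D:] M"
    unfolding poly_mat_linear M mat_eq_mat2 using D(1) by (simp add: field_simps)
  finally show ?thesis
    unfolding D_def .
qed

lemma trace_det_eq_if_same_annihilators:
  fixes A B :: "complex^2^2"
  assumes h: "\<And>p. poly_mat p A = 0 \<longleftrightarrow> poly_mat p B = 0"
  shows "trace A = trace B \<and> det A = det B"
proof (cases "\<exists>\<mu>. B = mat \<mu>")
  case True
  then obtain \<mu> where "B = mat \<mu>"
    by blast
  then have "A = B"
    using h[of "[:- \<mu>, 1:]"]
    by (cases A rule: mat2_cases) (simp add: poly_mat_linear mat_eq_mat2 zero_eq_mat2)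
  then show ?thesis
    by simp
next
  case False
  obtain a b c d where B: "B = mat2 a b c d"
    by (rule mat2_cases)
  have "poly_mat [:det A, - trace A, 1:] B - poly_mat [:det B, - trace B, 1:] B = 0"
    using h cayley_hamilton_2[of A] cayley_hamilton_2[of B] by simp
  then have E: "det A - det B + (trace B - trace A) * a = 0" "(trace B - trace A) * b = 0"
      "(trace B - trace A) * c = 0" "det A - det B + (trace B - trace A) * d = 0"
    unfolding poly_mat_quadratic B mat_eq_mat2 zero_eq_mat2 by (simp_all add: algebra_simps)
  have "trace A = trace B"
  proof (rule ccontr)
    assume ne: "trace A \<noteq> trace B"
    then have "b = 0" "c = 0"
      using E(2,3) by simp_all
    moreover have "(trace B - trace A) * a = (trace B - trace A) * d"
      using E(1) E(4) by (metis add_left_cancel)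
    then have "a = d"
      using ne by simp
    ultimately have "B = mat a"
      unfolding B mat_eq_mat2 by simp
    then show False
      using False by blast
  qed
  then show ?thesis
    using E(1) by simp
qed

lemma resolvent_norm_eq_if_poly_isometric:
  fixes A B :: "complex^2^2"
  assumes h: "\<And>p. spec_norm (poly_mat p A) = spec_norm (poly_mat p B)"
  shows "resolvent_norm A z = resolvent_norm B z"
proof -
  have "poly_mat p A = 0 \<longleftrightarrow> poly_mat p B = 0" for p
    by (simp only: spec_norm_eq_0_iff[symmetric] h)
  then have td: "trace A = trace B" "det A = det B"
    using trace_det_eq_if_same_annihilators by blast+
  then have det: "det (mat z - A) = det (mat z - B)"
    unfolding det_mat_minus_2 by simp
  show ?thesis
  proof (cases "det (mat z - A) = 0")
    case True
    then have "resolvent_norm A z = \<infinity>" "resolvent_norm B z = \<infinity>"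
      using det by (simp_all add: resolvent_norm_eq_infinity_iff)
    then show ?thesis
      by simp
  next
    case False
    then show ?thesis
      using det td by (simp add: resolvent_norm_finite matrix_inv_mat_minus_eq_poly_mat h)
  qed
qed

lemma unitarily_similar_if_resolvent_norm_eq:
  fixes A B :: "complex^2^2"
  assumes h: "\<And>z. resolvent_norm A z = resolvent_norm B z"
  shows "unitarily_similar A B"
proof -
  have "det (mat z - A) = 0 \<longleftrightarrow> det (mat z - B) = 0" for z
    by (simp only: resolvent_norm_eq_infinity_iff[symmetric] h)
  then have td: "trace A = trace B" "det A = det B"
    using trace_det_eq_if_same_eigenvalues by blast+
  obtain z where z: "det (mat z - A) \<noteq> 0"
    using exists_non_eigenvalue by blast
  define MA MB where "MA = mat z - A" and "MB = mat z - B"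
  have det: "det MA \<noteq> 0" "det MB = det MA"
    using z td unfolding MA_def MB_def det_mat_minus_2 by simp_all
  have norm: "spec_norm (matrix_inv MA) = spec_norm (matrix_inv MB)"
    using h[of z] det unfolding MA_def MB_def by (simp add: resolvent_norm_finite)
  have "MA ** matrix_inv MA = mat 1"
    using det(1) by (simp add: matrix_inv_inverse invertible_det_nz)
  moreover have "mat 1 \<noteq> (0 :: complex^2^2)"
    by (simp add: mat_eq_mat2 zero_eq_mat2)
  ultimately have "matrix_inv MA \<noteq> 0"
    by force
  then have "0 < spec_norm (matrix_inv MA)"
    using spec_norm_nonneg[of "matrix_inv MA"] spec_norm_eq_0_iff[of "matrix_inv MA"] by simp
  then have "frob_sq (matrix_inv MA) = frob_sq (matrix_inv MB)"
    using norm det by (simp add: frob_sq_eq_spec_norm_det det_matrix_inv)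
  then have "frob_sq MA = frob_sq MB"
    using det by (simp add: frob_sq_matrix_inv)
  then have "frob_sq A = frob_sq B"
    using frob_sq_eq_if_shift_eq td unfolding MA_def MB_def by blast
  then show ?thesis
    using td unitarily_similar_if_trace_det_frob_sq_eq by blast
qed

lemma unitarily_similar_if_sing_val_eq:
  fixes A B :: "complex^2^2"
  assumes h: "\<And>z k. k \<in> {1, 2} \<Longrightarrow> sing_val (mat z - A) k = sing_val (mat z - B) k"
  shows "unitarily_similar A B"
proof -
  have gram: "gram_eig_max (mat z - A) = gram_eig_max (mat z - B)"
    "gram_eig_min (mat z - A) = gram_eig_min (mat z - B)" for z
    using h[of 1 z] h[of 2 z] gram_eig_max_nonneg gram_eig_min_nonneg
    unfolding sing_val_2 by simp_all
  have "det (mat z - A) = 0 \<longleftrightarrow> det (mat z - B) = 0" for z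
    by (simp only: gram_eig_min_eq_0_iff[symmetric] gram)
  then have td: "trace A = trace B" "det A = det B"
    using trace_det_eq_if_same_eigenvalues by blast+
  have "frob_sq (mat 0 - A) = frob_sq (mat 0 - B)"
    by (simp only: gram_eig_max_add_min[symmetric] gram)
  then have "frob_sq A = frob_sq B"
    using frob_sq_eq_if_shift_eq td by blast
  then show ?thesis
    using td unitarily_similar_if_trace_det_frob_sq_eq by blast
qed

lemma poly_isometric_if_unitarily_similar:
  fixes A B :: "complex^2^2"
  shows "unitarily_similar A B \<Longrightarrow> spec_norm (poly_mat p A) = spec_norm (poly_mat p B)"
  unfolding unitarily_similar_def
  by (auto simp: poly_mat_unitary_conj spec_norm_unitary_conj)

lemma sing_val_eq_if_unitarily_similar:
  fixes A B :: "complex^2^2"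
  assumes "unitarily_similar A B"
  shows "sing_val (mat z - A) k = sing_val (mat z - B) k"
proof -
  obtain U where U: "unitary_mat U" "B = adj U ** A ** U"
    using assms unfolding unitarily_similar_def by blast
  then have "mat z - B = adj U ** (mat z - A) ** U"
    by (simp add: matrix_diff_conj unitary_conj_mat)
  then show ?thesis
    unfolding sing_val_def using singular_values_unitary_conj[OF U(1)] by simp
qed

theorem theorem2:
  fixes A B :: "complex^2^2"
  shows "((\<forall>z. resolvent_norm A z = resolvent_norm B z) \<longleftrightarrow>
          (\<forall>p. spec_norm (poly_mat p A) = spec_norm (poly_mat p B))) \<and>
         ((\<forall>p. spec_norm (poly_mat p A) = spec_norm (poly_mat p B)) \<longleftrightarrow>
          (\<forall>z. \<forall>k\<in>{1, 2}. sing_val (mat z - A) k = sing_val (mat z - B) k)) \<and>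
         ((\<forall>z. \<forall>k\<in>{1, 2}. sing_val (mat z - A) k = sing_val (mat z - B) k) \<longleftrightarrow>
          unitarily_similar A B)"
  using unitarily_similar_if_resolvent_norm_eq[of A B] poly_isometric_if_unitarily_similar[of A B]
    resolvent_norm_eq_if_poly_isometric[of A B] sing_val_eq_if_unitarily_similar[of A B]
    unitarily_similar_if_sing_val_eq[of A B]
  by blast

end
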